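(* Let $(\Sigma,\sigma)$ be a (possibly nodal) symmetric surface and $(V,\varphi)$ a real bundle pair over $(\Sigma,\sigma)$. For every $x\in\Sigma\setminus\Sigma^\sigma$, every open neighborhood $U\subset\Sigma$ of $x$, and every path $\psi_{t;x}$ ($t\in[0,1]$) in $\mathrm{SL}(V_x)$, there exists a path $\Psi_t$ in $\mathrm{SL}(V,\varphi)$ such that $\Psi_t|_x=\psi_{t;x}$ for all $t$ and $\Psi_t=\mathrm{Id}$ over $\Sigma\setminus(U\cup\sigma(U))$. The same holds with $\mathrm{SL}(V_x)$ and $\mathrm{SL}(V,\varphi)$ replaced by $\mathrm{GL}(V_x)$ and $\mathrm{GL}(V,\varphi)$.
   Context: A symmetric surface $(\Sigma,\sigma)$ is a closed oriented (possibly nodal) surface with an orientation-reversing involution $\sigma$; $\Sigma^\sigma$ is its fixed locus. A real bundle pair $(V,\varphi)$ over $(\Sigma,\sigma)$ is a complex vector bundle $V\to\Sigma$ with a bundle map $\varphi$ covering $\sigma$, anti-complex-linear on fibers, with $\varphi^2=\mathrm{id}$. $\mathrm{GL}(V_x)$ and $\mathrm{SL}(V_x)$ are the complex-linear automorphisms of the fiber $V_x$ and those of complex determinant $1$. $\mathrm{GL}(V,\varphi)$ is the group of $\mathbb C$-linear bundle automorphisms of $V$ covering $\mathrm{id}_\Sigma$ and commuting with $\varphi$, and $\mathrm{SL}(V,\varphi)$ the subgroup of those inducing the identity on $\Lambda^{\mathrm{top}}_{\mathbb C}V$. *)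

theory Defs
  imports "HOL-Analysis.Analysis" "HOL-Homology.Homology"
begin

text \<open>Local model of a node: two discs meeting transversally at one point.\<close>
definition nodal_model :: "(complex \<times> complex) set" where
  "nodal_model = {(z, w). z * w = 0 \<and> norm z < 1 \<and> norm w < 1}"

definition smooth_point :: "'a topology \<Rightarrow> 'a \<Rightarrow> bool" where
  "smooth_point X x \<longleftrightarrow> (\<exists>W f. openin X W \<and> x \<in> W \<and>
      homeomorphic_map (subtopology X W) (top_of_set (ball (0::complex) 1)) f)"

definition node_point :: "'a topology \<Rightarrow> 'a \<Rightarrow> bool" where
  "node_point X x \<longleftrightarrow> (\<exists>W f. openin X W \<and> x \<in> W \<and>
      homeomorphic_map (subtopology X W) (top_of_set nodal_model) f \<and> f x = (0, 0))"

definition smooth_locus :: "'a topology \<Rightarrow> 'a set" where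
  "smooth_locus X = {x \<in> topspace X. smooth_point X x}"

definition nodal_surface :: "'a topology \<Rightarrow> bool" where
  "nodal_surface X \<longleftrightarrow> compact_space X \<and> Hausdorff_space X \<and>
     (\<forall>x\<in>topspace X. smooth_point X x \<or> node_point X x)"

text \<open>Topological orientation (in the sense of singular homology) of the smooth locus,
  which is the same as an orientation of the normalization.\<close>
definition local_homology_generator :: "'a topology \<Rightarrow> 'a \<Rightarrow> 'a chain set \<Rightarrow> bool" where
  "local_homology_generator X x a \<longleftrightarrow>
     (let G = relative_homology_group 2 X (topspace X - {x}) in
       a \<in> carrier G \<and> (\<forall>b\<in>carrier G. \<exists>k::int. b = a [^]\<^bsub>G\<^esub> k))"

definition orientation :: "'a topology \<Rightarrow> ('a \<Rightarrow> 'a chain set) \<Rightarrow> bool" where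
  "orientation X ort \<longleftrightarrow>
     (\<forall>x\<in>smooth_locus X. local_homology_generator X x (ort x)) \<and>
     (\<forall>x\<in>smooth_locus X. \<exists>B U \<alpha>. openin X U \<and> x \<in> U \<and> U \<subseteq> B \<and> B \<subseteq> smooth_locus X \<and>
         \<alpha> \<in> carrier (relative_homology_group 2 X (topspace X - B)) \<and>
         (\<forall>y\<in>B. hom_induced 2 X (topspace X - B) X (topspace X - {y}) id \<alpha> = ort y))"

definition orientation_reversing :: "'a topology \<Rightarrow> ('a \<Rightarrow> 'a chain set) \<Rightarrow> ('a \<Rightarrow> 'a) \<Rightarrow> bool" where
  "orientation_reversing X ort \<sigma> \<longleftrightarrow>
     (\<forall>x\<in>smooth_locus X.
        hom_induced 2 X (topspace X - {x}) X (topspace X - {\<sigma> x}) \<sigma> (ort x)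
        = inv\<^bsub>relative_homology_group 2 X (topspace X - {\<sigma> x})\<^esub> (ort (\<sigma> x)))"

definition symmetric_surface :: "'a topology \<Rightarrow> ('a \<Rightarrow> 'a) \<Rightarrow> bool" where
  "symmetric_surface X \<sigma> \<longleftrightarrow> nodal_surface X \<and> continuous_map X X \<sigma> \<and>
     (\<forall>x\<in>topspace X. \<sigma> (\<sigma> x) = x) \<and>
     (\<exists>ort. orientation X ort \<and> orientation_reversing X ort \<sigma>)"

definition fixed_locus :: "'a topology \<Rightarrow> ('a \<Rightarrow> 'a) \<Rightarrow> 'a set" where
  "fixed_locus X \<sigma> = {x \<in> topspace X. \<sigma> x = x}"

definition complex_vector_bundle ::
  "'n::finite itself \<Rightarrow> 'a topology \<Rightarrow> 'e topology \<Rightarrow> ('e \<Rightarrow> 'a) \<Rightarrow>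
   ('e \<Rightarrow> 'e \<Rightarrow> 'e) \<Rightarrow> (complex \<Rightarrow> 'e \<Rightarrow> 'e) \<Rightarrow> bool" where
  "complex_vector_bundle _ X E p vadd vsmul \<longleftrightarrow>
     continuous_map E X p \<and>
     (\<forall>e1\<in>topspace E. \<forall>e2\<in>topspace E. p e1 = p e2 \<longrightarrow>
         vadd e1 e2 \<in> topspace E \<and> p (vadd e1 e2) = p e1) \<and>
     (\<forall>c. \<forall>e\<in>topspace E. vsmul c e \<in> topspace E \<and> p (vsmul c e) = p e) \<and>
     (\<forall>x\<in>topspace X. \<exists>W (h :: 'e \<Rightarrow> 'a \<times> (complex^'n)). openin X W \<and> x \<in> W \<and>
        homeomorphic_map (subtopology E {e \<in> topspace E. p e \<in> W})
                         (prod_topology (subtopology X W) euclidean) h \<and>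
        (\<forall>e\<in>topspace E. p e \<in> W \<longrightarrow> fst (h e) = p e) \<and>
        (\<forall>e1\<in>topspace E. \<forall>e2\<in>topspace E. p e1 \<in> W \<and> p e1 = p e2 \<longrightarrow>
            h (vadd e1 e2) = (p e1, snd (h e1) + snd (h e2))) \<and>
        (\<forall>c. \<forall>e\<in>topspace E. p e \<in> W \<longrightarrow> h (vsmul c e) = (p e, c *s snd (h e))))"

definition fibre :: "'e topology \<Rightarrow> ('e \<Rightarrow> 'a) \<Rightarrow> 'a \<Rightarrow> 'e set" where
  "fibre E p x = {e \<in> topspace E. p e = x}"

definition real_bundle_pair ::
  "'n::finite itself \<Rightarrow> 'a topology \<Rightarrow> ('a \<Rightarrow> 'a) \<Rightarrow> 'e topology \<Rightarrow> ('e \<Rightarrow> 'a) \<Rightarrow>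
   ('e \<Rightarrow> 'e \<Rightarrow> 'e) \<Rightarrow> (complex \<Rightarrow> 'e \<Rightarrow> 'e) \<Rightarrow> ('e \<Rightarrow> 'e) \<Rightarrow> bool" where
  "real_bundle_pair n X \<sigma> E p vadd vsmul \<phi> \<longleftrightarrow>
     complex_vector_bundle n X E p vadd vsmul \<and>
     continuous_map E E \<phi> \<and>
     (\<forall>e\<in>topspace E. p (\<phi> e) = \<sigma> (p e)) \<and>
     (\<forall>e\<in>topspace E. \<phi> (\<phi> e) = e) \<and>
     (\<forall>e1\<in>topspace E. \<forall>e2\<in>topspace E. p e1 = p e2 \<longrightarrow> \<phi> (vadd e1 e2) = vadd (\<phi> e1) (\<phi> e2)) \<and>
     (\<forall>c. \<forall>e\<in>topspace E. \<phi> (vsmul c e) = vsmul (cnj c) (\<phi> e))"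

definition fibre_linear ::
  "'e topology \<Rightarrow> ('e \<Rightarrow> 'a) \<Rightarrow> ('e \<Rightarrow> 'e \<Rightarrow> 'e) \<Rightarrow> (complex \<Rightarrow> 'e \<Rightarrow> 'e) \<Rightarrow> 'a \<Rightarrow> ('e \<Rightarrow> 'e) \<Rightarrow> bool" where
  "fibre_linear E p vadd vsmul x f \<longleftrightarrow>
     f \<in> fibre E p x \<rightarrow> fibre E p x \<and>
     (\<forall>e1\<in>fibre E p x. \<forall>e2\<in>fibre E p x. f (vadd e1 e2) = vadd (f e1) (f e2)) \<and>
     (\<forall>c. \<forall>e\<in>fibre E p x. f (vsmul c e) = vsmul c (f e))"

definition fibre_frame ::
  "'n::finite itself \<Rightarrow> 'e topology \<Rightarrow> ('e \<Rightarrow> 'a) \<Rightarrow> ('e \<Rightarrow> 'e \<Rightarrow> 'e) \<Rightarrow> (complex \<Rightarrow> 'e \<Rightarrow> 'e) \<Rightarrow>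
   'a \<Rightarrow> (complex^'n \<Rightarrow> 'e) \<Rightarrow> bool" where
  "fibre_frame _ E p vadd vsmul x b \<longleftrightarrow>
     bij_betw b UNIV (fibre E p x) \<and>
     (\<forall>u v. b (u + v) = vadd (b u) (b v)) \<and> (\<forall>c v. b (c *s v) = vsmul c (b v))"

definition in_GL_fibre ::
  "'e topology \<Rightarrow> ('e \<Rightarrow> 'a) \<Rightarrow> ('e \<Rightarrow> 'e \<Rightarrow> 'e) \<Rightarrow> (complex \<Rightarrow> 'e \<Rightarrow> 'e) \<Rightarrow> 'a \<Rightarrow> ('e \<Rightarrow> 'e) \<Rightarrow> bool" where
  "in_GL_fibre E p vadd vsmul x f \<longleftrightarrow>
     fibre_linear E p vadd vsmul x f \<and> bij_betw f (fibre E p x) (fibre E p x)"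

text \<open>SL(V_x): those of complex determinant 1 (determinant computed in any frame;
  equivalently, acting as the identity on the top exterior power).\<close>
definition in_SL_fibre ::
  "'n::finite itself \<Rightarrow> 'e topology \<Rightarrow> ('e \<Rightarrow> 'a) \<Rightarrow> ('e \<Rightarrow> 'e \<Rightarrow> 'e) \<Rightarrow> (complex \<Rightarrow> 'e \<Rightarrow> 'e) \<Rightarrow>
   'a \<Rightarrow> ('e \<Rightarrow> 'e) \<Rightarrow> bool" where
  "in_SL_fibre n E p vadd vsmul x f \<longleftrightarrow>
     in_GL_fibre E p vadd vsmul x f \<and>
     (\<forall>b. fibre_frame n E p vadd vsmul x b \<longrightarrow>
        det (matrix (\<lambda>v. the_inv_into UNIV b (f (b v)))) = 1)"

text \<open>Continuous path t \<in> [0,1] of maps of the fibre V_x (continuity in the natural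
  topology of End(V_x), i.e. joint continuity since V_x is finite dimensional).\<close>
definition fibre_path_cont :: "'e topology \<Rightarrow> ('e \<Rightarrow> 'a) \<Rightarrow> 'a \<Rightarrow> (real \<Rightarrow> 'e \<Rightarrow> 'e) \<Rightarrow> bool" where
  "fibre_path_cont E p x \<psi> \<longleftrightarrow>
     continuous_map (prod_topology (top_of_set {0..1}) (subtopology E (fibre E p x))) E
       (\<lambda>(t, e). \<psi> t e)"

definition GL_fibre_path where
  "GL_fibre_path E p vadd vsmul x \<psi> \<longleftrightarrow>
     (\<forall>t\<in>{0..1}. in_GL_fibre E p vadd vsmul x (\<psi> t)) \<and> fibre_path_cont E p x \<psi>"

definition SL_fibre_path where
  "SL_fibre_path n E p vadd vsmul x \<psi> \<longleftrightarrow>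
     (\<forall>t\<in>{0..1}. in_SL_fibre n E p vadd vsmul x (\<psi> t)) \<and> fibre_path_cont E p x \<psi>"

definition in_GL_bundle where
  "in_GL_bundle X E p vadd vsmul \<phi> \<Psi> \<longleftrightarrow>
     continuous_map E E \<Psi> \<and>
     (\<forall>x\<in>topspace X. in_GL_fibre E p vadd vsmul x \<Psi>) \<and>
     (\<forall>e\<in>topspace E. \<Psi> (\<phi> e) = \<phi> (\<Psi> e))"

definition in_SL_bundle where
  "in_SL_bundle n X E p vadd vsmul \<phi> \<Psi> \<longleftrightarrow>
     in_GL_bundle X E p vadd vsmul \<phi> \<Psi> \<and>
     (\<forall>x\<in>topspace X. in_SL_fibre n E p vadd vsmul x \<Psi>)"

text \<open>Continuous paths (in the C^0 / compact-open topology; Sigma is compact).\<close>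
definition bundle_path_cont :: "'e topology \<Rightarrow> (real \<Rightarrow> 'e \<Rightarrow> 'e) \<Rightarrow> bool" where
  "bundle_path_cont E \<Psi> \<longleftrightarrow>
     continuous_map (prod_topology (top_of_set {0..1}) E) E (\<lambda>(t, e). \<Psi> t e)"

definition GL_bundle_path where
  "GL_bundle_path X E p vadd vsmul \<phi> \<Psi> \<longleftrightarrow>
     (\<forall>t\<in>{0..1}. in_GL_bundle X E p vadd vsmul \<phi> (\<Psi> t)) \<and> bundle_path_cont E \<Psi>"

definition SL_bundle_path where
  "SL_bundle_path n X E p vadd vsmul \<phi> \<Psi> \<longleftrightarrow>
     (\<forall>t\<in>{0..1}. in_SL_bundle n X E p vadd vsmul \<phi> (\<Psi> t)) \<and> bundle_path_cont E \<Psi>"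

end

theory Submission
  imports Defs "HOL-Computational_Algebra.Polynomial"
begin

text \<open>In a local trivialisation around \<open>x\<close> the path \<open>\<psi>\<close> becomes a path of matrices in
  \<open>GL(n,\<complex>)\<close> (resp. \<open>SL(n,\<complex>)\<close>). These groups are path connected, so the matrix path is the
  end of a homotopy \<open>H s t\<close> starting at the constant path at the identity. Since \<open>\<sigma> x \<noteq> x\<close>,
  there is a neighbourhood \<open>W \<subseteq> U\<close> of \<open>x\<close> disjoint from \<open>\<sigma>(W)\<close>, and a bump function
  \<open>\<rho>\<close> with \<open>\<rho> x = 1\<close> supported in \<open>W\<close>. Acting by \<open>H (\<rho> y) t\<close> over \<open>y \<in> W\<close>, by the
  \<open>\<phi>\<close>-conjugate of this over \<open>\<sigma>(W)\<close> and by the identity elsewhere gives the required path of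
  bundle automorphisms commuting with \<open>\<phi>\<close>; conjugation by the anti-linear \<open>\<phi>\<close> conjugates
  determinants, so determinant one is preserved.\<close>

section \<open>Paths of matrices\<close>

lemma sum_in_range_poly:
  fixes f :: "'i \<Rightarrow> 'a::comm_semiring_0 \<Rightarrow> 'a"
  assumes "finite S" "\<And>i. i \<in> S \<Longrightarrow> f i \<in> range poly"
  shows "(\<lambda>z. \<Sum>i\<in>S. f i z) \<in> range poly"
  using assms
proof (induction S rule: finite_induct)
  case empty
  have "(\<lambda>z. \<Sum>i\<in>{}. f i z) = poly 0" by (simp add: fun_eq_iff)
  then show ?case by (rule range_eqI)
next
  case (insert a S)
  obtain P where P: "f a = poly P"
    using insert.prems by (meson insertI1 rangeE)
  obtain Q where Q: "(\<lambda>z. \<Sum>i\<in>S. f i z) = poly Q"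
    using insert.IH insert.prems by (meson insertCI rangeE)
  have "(\<lambda>z. \<Sum>i\<in>insert a S. f i z) = poly (P + Q)"
  proof
    fix z
    show "(\<Sum>i\<in>insert a S. f i z) = poly (P + Q) z"
      using insert.hyps fun_cong[OF P, of z] fun_cong[OF Q, of z] by simp
  qed
  then show ?case by (rule range_eqI)
qed

lemma prod_in_range_poly:
  fixes f :: "'i \<Rightarrow> 'a::comm_semiring_1 \<Rightarrow> 'a"
  assumes "finite S" "\<And>i. i \<in> S \<Longrightarrow> f i \<in> range poly"
  shows "(\<lambda>z. \<Prod>i\<in>S. f i z) \<in> range poly"
  using assms
proof (induction S rule: finite_induct)
  case empty
  have "(\<lambda>z. \<Prod>i\<in>{}. f i z) = poly 1" by (simp add: fun_eq_iff)
  then show ?case by (rule range_eqI)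
next
  case (insert a S)
  obtain P where P: "f a = poly P"
    using insert.prems by (meson insertI1 rangeE)
  obtain Q where Q: "(\<lambda>z. \<Prod>i\<in>S. f i z) = poly Q"
    using insert.IH insert.prems by (meson insertCI rangeE)
  have "(\<lambda>z. \<Prod>i\<in>insert a S. f i z) = poly (P * Q)"
  proof
    fix z
    show "(\<Prod>i\<in>insert a S. f i z) = poly (P * Q) z"
      using insert.hyps fun_cong[OF P, of z] fun_cong[OF Q, of z] by simp
  qed
  then show ?case by (rule range_eqI)
qed

lemma det_pencil_in_range_poly:
  fixes A B :: "'a::comm_ring_1^'n::finite^'n"
  shows "(\<lambda>z. det (\<chi> i j. A $ i $ j + z * B $ i $ j)) \<in> range poly"
proof -
  have "(\<lambda>z. of_int (sign q) * (\<Prod>i\<in>UNIV. A $ i $ q i + z * B $ i $ q i)) \<in> range poly"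
    for q :: "'n \<Rightarrow> 'n"
  proof -
    have "(\<lambda>z. A $ i $ q i + z * B $ i $ q i) = poly [:A $ i $ q i, B $ i $ q i:]" for i
      by (auto simp: algebra_simps)
    then obtain P where "(\<lambda>z. \<Prod>i\<in>UNIV. A $ i $ q i + z * B $ i $ q i) = poly P"
      using prod_in_range_poly[of UNIV "\<lambda>i z. A $ i $ q i + z * B $ i $ q i"] by auto
    then have "(\<lambda>z. of_int (sign q) * (\<Prod>i\<in>UNIV. A $ i $ q i + z * B $ i $ q i))
        = poly (Polynomial.smult (of_int (sign q)) P)"
      by (simp add: fun_eq_iff)
    then show ?thesis by (rule range_eqI)
  qed
  then show ?thesis
    unfolding det_def by (auto intro!: sum_in_range_poly simp: finite_permutations)
qed

text \<open>Two invertible matrices are joined by the complex line through them, minus the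
  finitely many points where the determinant of the pencil vanishes.\<close>
lemma path_connected_invertible:
  "path_connected {A :: complex^'n::finite^'n. invertible A}"
  unfolding path_connected_def
proof (intro ballI)
  fix A B :: "complex^'n^'n"
  assume A: "A \<in> {A. invertible A}" and B: "B \<in> {A. invertible A}"
  define F where "F z = (\<chi> i j. A $ i $ j + z * (B - A) $ i $ j)" for z :: complex
  have "(\<lambda>z. det (F z)) \<in> range poly"
    unfolding F_def by (rule det_pencil_in_range_poly)
  then obtain P where P: "\<And>z. det (F z) = poly P z"
    by (metis rangeE)
  have F0: "F 0 = A" and F1: "F 1 = B" by (simp_all add: F_def vec_eq_iff)
  then have "poly P 0 \<noteq> 0" using A P by (metis invertible_det_nz mem_Collect_eq)
  then have "finite {z. poly P z = 0}" by (intro poly_roots_finite) auto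
  then have "countable {z. det (F z) = 0}"
    by (simp add: P countable_finite)
  then have "path_connected (- {z. det (F z) = 0})"
    by (intro path_connected_complement_countable) auto
  moreover have "0 \<in> - {z. det (F z) = 0}" "1 \<in> - {z. det (F z) = 0}"
    using A B F0 F1 by (auto simp: invertible_det_nz)
  ultimately obtain g where g: "path g" "path_image g \<subseteq> - {z. det (F z) = 0}"
    "pathstart g = 0" "pathfinish g = 1"
    unfolding path_connected_def by blast
  have "path (F \<circ> g)"
    using g(1) unfolding path_def F_def o_def by (intro continuous_intros)
  moreover have "path_image (F \<circ> g) \<subseteq> {A. invertible A}"
    using g(2) by (auto simp: path_image_def invertible_det_nz)
  moreover have "pathstart (F \<circ> g) = A" "pathfinish (F \<circ> g) = B"
    using g F0 F1 by (simp_all add: pathstart_def pathfinish_def)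
  ultimately show "\<exists>\<gamma>. path \<gamma> \<and> path_image \<gamma> \<subseteq> {A. invertible A} \<and> pathstart \<gamma> = A \<and> pathfinish \<gamma> = B"
    by blast
qed

lemma continuous_on_matrix_mult [continuous_intros]:
  fixes F G :: "'x::topological_space \<Rightarrow> complex^'n::finite^'n"
  assumes "continuous_on S F" "continuous_on S G"
  shows "continuous_on S (\<lambda>x. F x ** G x)"
  unfolding matrix_matrix_mult_def by (intro continuous_intros assms)

lemma continuous_on_det [continuous_intros]:
  fixes F :: "'x::topological_space \<Rightarrow> complex^'n::finite^'n"
  assumes "continuous_on S F"
  shows "continuous_on S (\<lambda>x. det (F x))"
  unfolding det_def by (intro continuous_intros assms)

lemma invertible_path_homotopy_from_id:
  fixes M :: "real \<Rightarrow> complex^'n::finite^'n"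
  assumes M: "continuous_on {0..1} M" "\<And>t. t \<in> {0..1} \<Longrightarrow> invertible (M t)"
  obtains H :: "real \<Rightarrow> real \<Rightarrow> complex^'n^'n"
  where "continuous_on ({0..1} \<times> {0..1}) (\<lambda>(s, t). H s t)"
    "\<And>t. t \<in> {0..1} \<Longrightarrow> H 0 t = mat 1" "\<And>t. t \<in> {0..1} \<Longrightarrow> H 1 t = M t"
    "\<And>s t. s \<in> {0..1} \<Longrightarrow> t \<in> {0..1} \<Longrightarrow> invertible (H s t)"
proof -
  have "mat 1 \<in> {A :: complex^'n^'n. invertible A}" "M 0 \<in> {A. invertible A}"
    using M(2) by (auto simp: invertible_det_nz)
  then obtain \<gamma> where \<gamma>: "path \<gamma>" "path_image \<gamma> \<subseteq> {A. invertible A}"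
    "pathstart \<gamma> = mat 1" "pathfinish \<gamma> = M 0"
    using path_connected_invertible unfolding path_connected_def by blast
  obtain N where N: "M 0 ** N = mat 1" "N ** M 0 = mat 1"
    using M(2)[of 0] unfolding invertible_def by auto
  then have "invertible N"
    unfolding invertible_def by auto
  define H where "H s t = \<gamma> s ** N ** M (s * t)" for s t
  have "continuous_on ({0..1} \<times> {0..1}) (\<lambda>x. \<gamma> (fst x) ** N ** M (fst x * snd x))"
  proof (intro continuous_intros)
    show "continuous_on ({0..1} \<times> {0..1}) (\<lambda>x. \<gamma> (fst x))"
      using \<gamma>(1) unfolding path_def
      by (rule continuous_on_compose2) (auto intro: continuous_intros)
    show "continuous_on ({0..1} \<times> {0..1}) (\<lambda>x. M (fst x * snd x))"
      by (rule continuous_on_compose2[OF M(1)]) (auto intro!: continuous_intros mult_le_one)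
  qed
  then have "continuous_on ({0..1} \<times> {0..1}) (\<lambda>(s, t). H s t)"
    by (simp add: H_def case_prod_beta)
  moreover have "H 0 t = mat 1" "H 1 t = M t" for t
    using \<gamma>(3,4) N by (simp_all add: H_def pathstart_def pathfinish_def)
  moreover have "invertible (H s t)" if "s \<in> {0..1}" "t \<in> {0..1}" for s t
  proof -
    have "s * t \<in> {0..1}" using that by (auto intro: mult_le_one)
    moreover have "invertible (\<gamma> s)"
      using that \<gamma>(2) by (auto simp: path_image_def image_subset_iff)
    ultimately show ?thesis
      using \<open>invertible N\<close> M(2) by (simp add: H_def invertible_mult)
  qed
  ultimately show ?thesis using that by blast
qed

text \<open>Dividing one column by the determinant turns an invertible homotopy into one of
  determinant one, without changing it where the determinant is already one.\<close>
lemma det_one_path_homotopy_from_id: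
  fixes M :: "real \<Rightarrow> complex^'n::finite^'n"
  assumes M: "continuous_on {0..1} M" "\<And>t. t \<in> {0..1} \<Longrightarrow> det (M t) = 1"
  obtains H :: "real \<Rightarrow> real \<Rightarrow> complex^'n^'n"
  where "continuous_on ({0..1} \<times> {0..1}) (\<lambda>(s, t). H s t)"
    "\<And>t. t \<in> {0..1} \<Longrightarrow> H 0 t = mat 1" "\<And>t. t \<in> {0..1} \<Longrightarrow> H 1 t = M t"
    "\<And>s t. s \<in> {0..1} \<Longrightarrow> t \<in> {0..1} \<Longrightarrow> det (H s t) = 1"
proof -
  obtain G :: "real \<Rightarrow> real \<Rightarrow> complex^'n^'n" where G:
    "continuous_on ({0..1} \<times> {0..1}) (\<lambda>(s, t). G s t)"
    "\<And>t. t \<in> {0..1} \<Longrightarrow> G 0 t = mat 1" "\<And>t. t \<in> {0..1} \<Longrightarrow> G 1 t = M t"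
    "\<And>s t. s \<in> {0..1} \<Longrightarrow> t \<in> {0..1} \<Longrightarrow> invertible (G s t)"
    using invertible_path_homotopy_from_id[of M] M by (auto simp: invertible_det_nz)
  fix k :: 'n
  define D where "D s t = (\<chi> i j. if i = j then if i = k then inverse (det (G s t)) else 1 else 0)"
    for s t
  define H where "H s t = G s t ** D s t" for s t
  have detD: "det (D s t) = inverse (det (G s t))" for s t
    by (subst det_diagonal) (auto simp: D_def prod.If_cases)
  have "continuous_on ({0..1} \<times> {0..1}) (\<lambda>x. G (fst x) (snd x) ** D (fst x) (snd x))"
  proof -
    have cG: "continuous_on ({0..1} \<times> {0..1}) (\<lambda>x. G (fst x) (snd x))"
      using G(1) by (simp add: case_prod_beta)
    have nz: "\<forall>x\<in>{0..1} \<times> {0..1}. det (G (fst x) (snd x)) \<noteq> 0"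
      using G(4) by (auto simp: invertible_det_nz)
    show ?thesis
      unfolding D_def
    proof (intro continuous_intros cG)
      fix i j :: 'n
      show "continuous_on ({0..1} \<times> {0..1})
          (\<lambda>x. if i = j then if i = k then inverse (det (G (fst x) (snd x))) else 1 else 0)"
        by (cases "i = j"; cases "i = k") (auto intro!: continuous_intros cG nz)
    qed
  qed
  then have "continuous_on ({0..1} \<times> {0..1}) (\<lambda>(s, t). H s t)"
    by (simp add: H_def case_prod_beta)
  moreover have "D 0 t = mat 1" "D 1 t = mat 1" if "t \<in> {0..1}" for t
  proof -
    have "det (G 0 t) = 1" "det (G 1 t) = 1"
      using that G(2,3) M(2) by simp_all
    then show "D 0 t = mat 1" "D 1 t = mat 1"
      by (auto simp: D_def mat_def vec_eq_iff)
  qed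
  then have "H 0 t = mat 1" "H 1 t = M t" if "t \<in> {0..1}" for t
    using that G(2,3) by (simp_all add: H_def)
  moreover have "det (H s t) = 1" if "s \<in> {0..1}" "t \<in> {0..1}" for s t
    using G(4)[OF that] by (simp add: H_def det_mul detD invertible_det_nz)
  ultimately show ?thesis using that by blast
qed

section \<open>Gluing and bump functions\<close>

lemma continuous_map_open_cover:
  assumes "\<And>S. S \<in> \<S> \<Longrightarrow> openin Z S" "topspace Z \<subseteq> \<Union>\<S>"
    and "\<And>S. S \<in> \<S> \<Longrightarrow> continuous_map (subtopology Z S) Y f"
  shows "continuous_map Z Y f"
  by (rule pasting_lemma[where I=\<S> and T=id and f="\<lambda>_. f"]) (use assms in auto)

lemma continuous_map_on_unit_square:
  fixes H :: "real \<Rightarrow> real \<Rightarrow> 'b::topological_space"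
  assumes H: "continuous_on ({0..1} \<times> {0..1}) (\<lambda>(s, t). H s t)"
    and a: "continuous_map Z (top_of_set {0..1}) a" and b: "continuous_map Z (top_of_set {0..1}) b"
  shows "continuous_map Z euclidean (\<lambda>z. H (a z) (b z))"
proof -
  have "continuous_map Z (top_of_set ({0..1} \<times> {0..1})) (\<lambda>z. (a z, b z))"
    using continuous_map_pairedI[OF a b] by (simp add: subtopology_Times)
  from continuous_map_compose[OF this H[folded continuous_map_iff_continuous]]
  show ?thesis by (simp add: o_def)
qed

lemma continuous_map_matrix_vector_mult:
  fixes A :: "'z \<Rightarrow> 'a::real_normed_algebra_1^'n::finite^'m::finite"
  assumes "continuous_map Z euclidean A" "continuous_map Z euclidean v"
  shows "continuous_map Z euclidean (\<lambda>z. A z *v v z)"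
proof -
  have "continuous_on UNIV (\<lambda>q :: ('a^'n^'m) \<times> ('a^'n). fst q *v snd q)"
    unfolding matrix_vector_mult_def by (intro continuous_intros)
  then have "continuous_map euclidean euclidean (\<lambda>q :: ('a^'n^'m) \<times> ('a^'n). fst q *v snd q)"
    by simp
  from continuous_map_compose[OF continuous_map_pairedI[OF assms, simplified] this]
  show ?thesis by (simp add: o_def)
qed

lemma involution_free_neighbourhood:
  assumes "Hausdorff_space X" "continuous_map X X \<sigma>" "openin X U" "x \<in> U" "\<sigma> x \<noteq> x"
  obtains W where "openin X W" "x \<in> W" "W \<subseteq> U" "\<And>y. y \<in> W \<Longrightarrow> \<sigma> y \<notin> W"
proof -
  have "x \<in> topspace X" "\<sigma> x \<in> topspace X"
    using assms openin_subset continuous_map_image_subset_topspace by fastforce+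
  then obtain A B where AB: "openin X A" "openin X B" "x \<in> A" "\<sigma> x \<in> B" "disjnt A B"
    using assms(1,5) unfolding Hausdorff_space_def by metis
  let ?W = "A \<inter> U \<inter> {y \<in> topspace X. \<sigma> y \<in> B}"
  have "openin X ?W"
    using AB assms(2,3) by (intro openin_Int openin_continuous_map_preimage)
  moreover have "\<sigma> y \<notin> ?W" if "y \<in> ?W" for y
    using that AB(5) by (auto simp: disjnt_iff)
  ultimately show ?thesis
    using that AB assms(4) \<open>x \<in> topspace X\<close> by blast
qed

lemma bump_function:
  assumes "compact_space X" "Hausdorff_space X" "openin X W" "x \<in> W"
  obtains V \<rho> where "openin X V" "x \<in> V" "X closure_of V \<subseteq> W"
    "continuous_map X (top_of_set {0..1::real}) \<rho>" "\<rho> x = 1" "\<And>y. y \<in> topspace X - V \<Longrightarrow> \<rho> y = 0"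
proof -
  have x: "x \<in> topspace X" using assms(3,4) openin_subset by blast
  have "regular_space X" "normal_space X"
    using assms(1,2) compact_Hausdorff_imp_regular_space compact_Hausdorff_or_regular_imp_normal_space
    by auto
  moreover have "closedin X (topspace X - W)" "x \<in> topspace X - (topspace X - W)"
    using assms(3,4) x by auto
  ultimately obtain V where V: "openin X V" "x \<in> V" "disjnt (topspace X - W) (X closure_of V)"
    unfolding regular_space by metis
  have cl: "X closure_of V \<subseteq> W"
    using V(3) closure_of_subset_topspace by (fastforce simp: disjnt_iff)
  obtain \<rho> :: "'a \<Rightarrow> real" where \<rho>: "continuous_map X (top_of_set {0..1}) \<rho>"
    "\<rho> ` (topspace X - V) \<subseteq> {0}" "\<rho> ` {x} \<subseteq> {1}"
    using Urysohn_lemma[OF \<open>normal_space X\<close>, of "topspace X - V" "{x}" 0 1] V(1,2) x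
      assms(2) by (auto simp: closedin_Hausdorff_singleton)
  show ?thesis
    by (rule that[OF V(1,2) cl \<rho>(1)]) (use \<rho>(2,3) in auto)
qed

section \<open>Symmetrization along the involution\<close>

definition symmetrize :: "('e \<Rightarrow> 'a) \<Rightarrow> ('a \<Rightarrow> 'a) \<Rightarrow> ('e \<Rightarrow> 'e) \<Rightarrow> 'a set \<Rightarrow> ('e \<Rightarrow> 'e) \<Rightarrow> 'e \<Rightarrow> 'e"
  where "symmetrize p \<sigma> \<phi> W f e =
    (if p e \<in> W then f e else if \<sigma> (p e) \<in> W then \<phi> (f (\<phi> e)) else e)"

locale involutive_bundle =
  fixes X :: "'a topology" and \<sigma> :: "'a \<Rightarrow> 'a" and E :: "'e topology" and p :: "'e \<Rightarrow> 'a"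
    and \<phi> :: "'e \<Rightarrow> 'e"
  assumes continuous_sigma: "continuous_map X X \<sigma>"
    and sigma_sigma: "\<And>y. y \<in> topspace X \<Longrightarrow> \<sigma> (\<sigma> y) = y"
    and continuous_p: "continuous_map E X p"
    and continuous_phi: "continuous_map E E \<phi>"
    and p_phi: "\<And>e. e \<in> topspace E \<Longrightarrow> p (\<phi> e) = \<sigma> (p e)"
    and phi_phi: "\<And>e. e \<in> topspace E \<Longrightarrow> \<phi> (\<phi> e) = e"
begin

lemma sigma_in_topspace: "y \<in> topspace X \<Longrightarrow> \<sigma> y \<in> topspace X"
  using continuous_sigma continuous_map_image_subset_topspace by blast

lemma p_in_topspace: "e \<in> topspace E \<Longrightarrow> p e \<in> topspace X"
  using continuous_p continuous_map_image_subset_topspace by blast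

lemma phi_in_topspace: "e \<in> topspace E \<Longrightarrow> \<phi> e \<in> topspace E"
  using continuous_phi continuous_map_image_subset_topspace by blast

lemma phi_fibre: "e \<in> fibre E p y \<Longrightarrow> \<phi> e \<in> fibre E p (\<sigma> y)"
  by (auto simp: fibre_def phi_in_topspace p_phi)

lemma bij_betw_phi_fibre:
  assumes "y \<in> topspace X"
  shows "bij_betw \<phi> (fibre E p y) (fibre E p (\<sigma> y))"
proof (rule bij_betw_byWitness[where f'=\<phi>])
  show "\<forall>e\<in>fibre E p y. \<phi> (\<phi> e) = e" "\<forall>e\<in>fibre E p (\<sigma> y). \<phi> (\<phi> e) = e"
    by (auto simp: fibre_def phi_phi)
  show "\<phi> ` fibre E p y \<subseteq> fibre E p (\<sigma> y)"
    using phi_fibre by blast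
  show "\<phi> ` fibre E p (\<sigma> y) \<subseteq> fibre E p y"
    using phi_fibre[of _ "\<sigma> y"] sigma_sigma[OF assms] by auto
qed

lemma symmetrize_phi:
  assumes free: "\<And>y. y \<in> W \<Longrightarrow> \<sigma> y \<notin> W"
    and f: "\<And>e. e \<in> topspace E \<Longrightarrow> p e \<in> W \<Longrightarrow> f e \<in> topspace E"
    and e: "e \<in> topspace E"
  shows "symmetrize p \<sigma> \<phi> W f (\<phi> e) = \<phi> (symmetrize p \<sigma> \<phi> W f e)"
proof -
  have p: "p (\<phi> e) = \<sigma> (p e)" "\<sigma> (p (\<phi> e)) = p e"
    using e p_phi sigma_sigma p_in_topspace by auto
  consider "p e \<in> W" | "p e \<notin> W" "\<sigma> (p e) \<in> W" | "p e \<notin> W" "\<sigma> (p e) \<notin> W"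
    by blast
  then show ?thesis
  proof cases
    case 1
    then show ?thesis using free p e by (simp add: symmetrize_def phi_phi)
  next
    case 2
    then show ?thesis
      using p e f[of "\<phi> e"] by (simp add: symmetrize_def phi_phi phi_in_topspace)
  next
    case 3
    then show ?thesis using p by (simp add: symmetrize_def)
  qed
qed

lemma symmetrize_fibrewise:
  fixes P :: "'a \<Rightarrow> ('e \<Rightarrow> 'e) \<Rightarrow> bool"
  assumes y: "y \<in> topspace X"
    and P_W: "\<And>y. y \<in> W \<Longrightarrow> P y f"
    and P_conj: "\<And>y f. y \<in> topspace X \<Longrightarrow> P (\<sigma> y) f \<Longrightarrow> P y (\<lambda>e. \<phi> (f (\<phi> e)))"
    and P_id: "\<And>y. P y (\<lambda>e. e)"
    and P_cong: "\<And>y f f'. P y f \<Longrightarrow> (\<And>e. e \<in> fibre E p y \<Longrightarrow> f e = f' e) \<Longrightarrow> P y f'"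
  shows "P y (symmetrize p \<sigma> \<phi> W f)"
proof -
  consider "y \<in> W" | "y \<notin> W" "\<sigma> y \<in> W" | "y \<notin> W" "\<sigma> y \<notin> W"
    by blast
  then show ?thesis
  proof cases
    case 1
    then show ?thesis
      by (intro P_cong[OF P_W[OF 1]]) (simp add: symmetrize_def fibre_def)
  next
    case 2
    then show ?thesis
      by (intro P_cong[OF P_conj[OF y P_W[OF 2(2)]]]) (auto simp: symmetrize_def fibre_def)
  next
    case 3
    then show ?thesis
      by (intro P_cong[OF P_id]) (simp add: symmetrize_def fibre_def)
  qed
qed

lemma symmetrize_outside:
  assumes "W \<subseteq> U" "e \<in> topspace E" "p e \<notin> U \<union> \<sigma> ` U"
  shows "symmetrize p \<sigma> \<phi> W f e = e"
proof -
  have "\<sigma> (p e) \<notin> W"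
  proof
    assume "\<sigma> (p e) \<in> W"
    then have "\<sigma> (\<sigma> (p e)) \<in> \<sigma> ` U"
      using assms(1) by blast
    then show False
      using assms(3) sigma_sigma[OF p_in_topspace[OF assms(2)]] by simp
  qed
  then show ?thesis
    using assms(1,3) by (auto simp: symmetrize_def)
qed

lemma continuous_map_phi_conjugate:
  assumes F: "continuous_map (subtopology (prod_topology T E) (topspace T \<times> {e \<in> topspace E. p e \<in> W}))
      E (\<lambda>(t, e). F t e)"
  shows "continuous_map (subtopology (prod_topology T E) (topspace T \<times> {e \<in> topspace E. \<sigma> (p e) \<in> W}))
      E (\<lambda>z. \<phi> (F (fst z) (\<phi> (snd z))))"
proof -
  let ?Z = "prod_topology T E"
  have "continuous_map ?Z ?Z (\<lambda>z. (fst z, \<phi> (snd z)))"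
    using continuous_map_compose[OF continuous_map_snd continuous_phi]
    by (intro continuous_map_pairedI continuous_map_fst) (simp add: o_def)
  then have "continuous_map (subtopology ?Z (topspace T \<times> {e \<in> topspace E. \<sigma> (p e) \<in> W}))
      (subtopology ?Z (topspace T \<times> {e \<in> topspace E. p e \<in> W})) (\<lambda>(t, e). (t, \<phi> e))"
    unfolding case_prod_beta
    by (intro continuous_map_into_subtopology continuous_map_from_subtopology)
      (auto simp: phi_in_topspace p_phi)
  from continuous_map_compose[OF continuous_map_compose[OF this F] continuous_phi]
  show ?thesis
    by (simp add: o_def case_prod_beta)
qed

text \<open>The three open pieces: over \<open>W\<close>, over \<open>\<sigma>(W)\<close>, and away from \<open>K \<union> \<sigma>(K)\<close>, where the
  symmetrized map is the identity.\<close>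
lemma continuous_map_symmetrize:
  assumes W: "openin X W" "\<And>y. y \<in> W \<Longrightarrow> \<sigma> y \<notin> W" and K: "closedin X K" "K \<subseteq> W"
    and F: "continuous_map (subtopology (prod_topology T E) (topspace T \<times> {e \<in> topspace E. p e \<in> W}))
              E (\<lambda>(t, e). F t e)"
    and F_id: "\<And>t e. t \<in> topspace T \<Longrightarrow> e \<in> topspace E \<Longrightarrow> p e \<in> W - K \<Longrightarrow> F t e = e"
  shows "continuous_map (prod_topology T E) E (\<lambda>(t, e). symmetrize p \<sigma> \<phi> W (F t) e)"
proof (rule continuous_map_open_cover)
  let ?Z = "prod_topology T E"
  let ?O1 = "topspace T \<times> {e \<in> topspace E. p e \<in> W}"
  let ?O2 = "topspace T \<times> {e \<in> topspace E. \<sigma> (p e) \<in> W}"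
  let ?O3 = "topspace T \<times> ({e \<in> topspace E. p e \<in> topspace X - K} \<inter> {e \<in> topspace E. \<sigma> (p e) \<in> topspace X - K})"
  have sigma_p: "continuous_map E X (\<lambda>e. \<sigma> (p e))"
    using continuous_map_compose[OF continuous_p continuous_sigma] by (simp add: o_def)
  have open_K: "openin X (topspace X - K)"
    using K(1) by blast
  have "openin E {e \<in> topspace E. p e \<in> W}" "openin E {e \<in> topspace E. \<sigma> (p e) \<in> W}"
    "openin E ({e \<in> topspace E. p e \<in> topspace X - K} \<inter> {e \<in> topspace E. \<sigma> (p e) \<in> topspace X - K})"
    using openin_continuous_map_preimage[OF continuous_p W(1)]
      openin_continuous_map_preimage[OF sigma_p W(1)]
      openin_continuous_map_preimage[OF continuous_p open_K]
      openin_continuous_map_preimage[OF sigma_p open_K]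
    by auto
  then show "openin ?Z S" if "S \<in> {?O1, ?O2, ?O3}" for S
    using that by (auto simp only: openin_prod_Times_iff openin_topspace insert_iff empty_iff)
  show "topspace ?Z \<subseteq> \<Union>{?O1, ?O2, ?O3}"
    using K(2) p_in_topspace sigma_in_topspace by auto
  show "continuous_map (subtopology ?Z S) E (\<lambda>(t, e). symmetrize p \<sigma> \<phi> W (F t) e)"
    if "S \<in> {?O1, ?O2, ?O3}" for S
  proof -
    note O2 = continuous_map_phi_conjugate[OF F]
    have O3: "continuous_map (subtopology ?Z ?O3) E snd"
      by (intro continuous_map_from_subtopology continuous_map_snd)
    from that consider "S = ?O1" | "S = ?O2" | "S = ?O3"
      by blast
    then show ?thesis
    proof cases
      case 1
      show ?thesis
        unfolding 1 by (rule continuous_map_eq[OF F]) (auto simp: symmetrize_def)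
    next
      case 2
      show ?thesis
        unfolding 2 by (rule continuous_map_eq[OF O2])
          (use W(2) sigma_sigma p_in_topspace in \<open>force simp: symmetrize_def\<close>)
    next
      case 3
      show ?thesis
        unfolding 3 by (rule continuous_map_eq[OF O3])
          (use F_id phi_in_topspace p_phi phi_phi in \<open>auto simp: symmetrize_def\<close>)
    qed
  qed
qed

end

section \<open>Frames and the real structure\<close>

lemma in_GL_fibre_id: "in_GL_fibre E p vadd vsmul y (\<lambda>e. e)"
  using bij_betw_id unfolding in_GL_fibre_def fibre_linear_def id_def by auto

lemma fibre_frame_in_fibre: "fibre_frame n E p vadd vsmul y b \<Longrightarrow> b v \<in> fibre E p y"
  unfolding fibre_frame_def bij_betw_def by auto

lemma fibre_frame_inv_left:
  "fibre_frame n E p vadd vsmul y b \<Longrightarrow> the_inv_into UNIV b (b v) = v"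
  unfolding fibre_frame_def bij_betw_def by (simp add: the_inv_f_f)

lemma fibre_frame_inv_right:
  "fibre_frame n E p vadd vsmul y b \<Longrightarrow> e \<in> fibre E p y \<Longrightarrow> b (the_inv_into UNIV b e) = e"
  unfolding fibre_frame_def using f_the_inv_into_f_bij_betw by metis

lemma fibre_linear_in_fibre: "fibre_linear E p vadd vsmul y f \<Longrightarrow> e \<in> fibre E p y \<Longrightarrow> f e \<in> fibre E p y"
  unfolding fibre_linear_def by auto

definition frame_matrix ::
  "(complex^'n::finite \<Rightarrow> 'e) \<Rightarrow> (complex^'n \<Rightarrow> 'e) \<Rightarrow> ('e \<Rightarrow> 'e) \<Rightarrow> complex^'n^'n" where
  "frame_matrix b b' f = matrix (\<lambda>v. the_inv_into UNIV b' (f (b v)))"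

lemma in_SL_fibre_iff:
  "in_SL_fibre TYPE('n::finite) E p vadd vsmul y f \<longleftrightarrow> in_GL_fibre E p vadd vsmul y f \<and>
     (\<forall>b. fibre_frame TYPE('n) E p vadd vsmul y b \<longrightarrow> det (frame_matrix b b f) = 1)"
  by (simp add: in_SL_fibre_def frame_matrix_def)

lemma linear_frame_coordinates:
  assumes b: "fibre_frame n E p vadd vsmul y b" and b': "fibre_frame n E p vadd vsmul y b'"
    and f: "fibre_linear E p vadd vsmul y f"
  shows "Vector_Spaces.linear (*s) (*s) (\<lambda>v. the_inv_into UNIV b' (f (b v)))"
proof -
  define L where "L v = the_inv_into UNIV b' (f (b v))" for v
  have b'L: "b' (L v) = f (b v)" for v
    unfolding L_def
    by (rule fibre_frame_inv_right[OF b' fibre_linear_in_fibre[OF f fibre_frame_in_fibre[OF b]]])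
  have inj: "inj b'"
    using b' unfolding fibre_frame_def bij_betw_def by auto
  have "L (u + v) = L u + L v" for u v
  proof -
    have "b' (L (u + v)) = f (vadd (b u) (b v))"
      using b unfolding fibre_frame_def by (simp add: b'L)
    also have "\<dots> = vadd (f (b u)) (f (b v))"
      using f fibre_frame_in_fibre[OF b] unfolding fibre_linear_def by auto
    also have "\<dots> = b' (L u + L v)"
      using b' unfolding fibre_frame_def by (simp add: b'L)
    finally show ?thesis using inj by (auto dest: injD)
  qed
  moreover have "L (c *s v) = c *s L v" for c v
  proof -
    have "b' (L (c *s v)) = f (vsmul c (b v))"
      using b unfolding fibre_frame_def by (simp add: b'L)
    also have "\<dots> = vsmul c (f (b v))"
      using f fibre_frame_in_fibre[OF b] unfolding fibre_linear_def by auto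
    also have "\<dots> = b' (c *s L v)"
      using b' unfolding fibre_frame_def by (simp add: b'L)
    finally show ?thesis using inj by (auto dest: injD)
  qed
  ultimately show ?thesis
    unfolding L_def[symmetric] by unfold_locales auto
qed

lemma frame_matrix_apply:
  assumes "fibre_frame n E p vadd vsmul y b" "fibre_frame n E p vadd vsmul y b'"
    and "fibre_linear E p vadd vsmul y f"
  shows "frame_matrix b b' f *v v = the_inv_into UNIV b' (f (b v))"
  unfolding frame_matrix_def by (rule matrix_works[OF linear_frame_coordinates[OF assms]])

lemma frame_matrix_mult:
  assumes b: "fibre_frame n E p vadd vsmul y b" and b': "fibre_frame n E p vadd vsmul y b'"
    and b'': "fibre_frame n E p vadd vsmul y b''"
    and f: "fibre_linear E p vadd vsmul y f" and g: "fibre_linear E p vadd vsmul y g"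
  shows "frame_matrix b' b'' g ** frame_matrix b b' f = frame_matrix b b'' (\<lambda>e. g (f e))"
proof -
  have "(\<lambda>v. the_inv_into UNIV b'' (g (b' v))) \<circ> (\<lambda>v. the_inv_into UNIV b' (f (b v)))
      = (\<lambda>v. the_inv_into UNIV b'' (g (f (b v))))"
    using fibre_frame_inv_right[OF b' fibre_linear_in_fibre[OF f fibre_frame_in_fibre[OF b]]]
    by (simp add: fun_eq_iff)
  then show ?thesis
    unfolding frame_matrix_def
    using matrix_compose_gen[OF linear_frame_coordinates[OF b b' f] linear_frame_coordinates[OF b' b'' g]]
    by simp
qed

lemma frame_matrix_id:
  assumes "fibre_frame n E p vadd vsmul y b"
  shows "frame_matrix b b (\<lambda>e. e) = mat 1"
  using fibre_frame_inv_left[OF assms] by (simp add: frame_matrix_def matrix_id_mat_1[unfolded id_def])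

lemma det_frame_matrix_change_frame:
  assumes b: "fibre_frame n E p vadd vsmul y b" and b': "fibre_frame n E p vadd vsmul y b'"
    and f: "fibre_linear E p vadd vsmul y f"
  shows "det (frame_matrix b b f) = det (frame_matrix b' b' f)"
proof -
  have id: "fibre_linear E p vadd vsmul y (\<lambda>e. e)"
    unfolding fibre_linear_def by auto
  let ?C = "frame_matrix b b' (\<lambda>e. e)"
  have "frame_matrix b' b (\<lambda>e. e) ** ?C = mat 1"
    using frame_matrix_mult[OF b b' b id id] frame_matrix_id[OF b] by simp
  then have "det ?C \<noteq> 0"
    by (metis det_I det_mul mult_zero_right zero_neq_one)
  moreover have "?C ** frame_matrix b b f = frame_matrix b' b' f ** ?C"
    using frame_matrix_mult[OF b b b' f id] frame_matrix_mult[OF b b' b' id f] by simp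
  ultimately show ?thesis
    by (metis det_mul mult.commute mult_left_cancel)
qed

lemma invertible_frame_matrix:
  assumes b: "fibre_frame n E p vadd vsmul y b" and b': "fibre_frame n E p vadd vsmul y b'"
    and f: "in_GL_fibre E p vadd vsmul y f"
  shows "invertible (frame_matrix b b' f)"
proof -
  have fl: "fibre_linear E p vadd vsmul y f" and fb: "bij_betw f (fibre E p y) (fibre E p y)"
    using f unfolding in_GL_fibre_def by auto
  define L where "L v = the_inv_into UNIV b' (f (b v))" for v
  have bij_b: "bij_betw b UNIV (fibre E p y)" and bij_b': "bij_betw b' UNIV (fibre E p y)"
    using b b' unfolding fibre_frame_def by auto
  have "bij_betw (the_inv_into UNIV b') (fibre E p y) UNIV"
    by (rule bij_betw_the_inv_into[OF bij_b'])
  then have "bij_betw (the_inv_into UNIV b' \<circ> f \<circ> b) UNIV UNIV"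
    by (intro bij_betw_trans[OF bij_b] bij_betw_trans[OF fb])
  then have "bij L"
    by (simp add: L_def[abs_def] o_def)
  then show ?thesis
    unfolding invertible_eq_bij frame_matrix_def L_def[symmetric]
    using matrix_works[OF linear_frame_coordinates[OF b b' fl, folded L_def]]
    by (metis (no_types) ext)
qed

lemma in_SL_fibre_id: "in_SL_fibre TYPE('n::finite) E p vadd vsmul y (\<lambda>e. e)"
  by (simp add: in_SL_fibre_iff in_GL_fibre_id frame_matrix_id)

locale fibrewise_linear_structure =
  fixes E :: "'e topology" and p :: "'e \<Rightarrow> 'a"
    and vadd :: "'e \<Rightarrow> 'e \<Rightarrow> 'e" and vsmul :: "complex \<Rightarrow> 'e \<Rightarrow> 'e"
  assumes vadd_fibre: "\<And>y e1 e2. e1 \<in> fibre E p y \<Longrightarrow> e2 \<in> fibre E p y \<Longrightarrow> vadd e1 e2 \<in> fibre E p y"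
    and vsmul_fibre: "\<And>y c e. e \<in> fibre E p y \<Longrightarrow> vsmul c e \<in> fibre E p y"
begin

lemma in_GL_fibre_cong:
  assumes f: "in_GL_fibre E p vadd vsmul y f" and eq: "\<And>e. e \<in> fibre E p y \<Longrightarrow> f e = f' e"
  shows "in_GL_fibre E p vadd vsmul y f'"
proof -
  have "fibre_linear E p vadd vsmul y f" "bij_betw f (fibre E p y) (fibre E p y)"
    using f unfolding in_GL_fibre_def by auto
  then show ?thesis
    unfolding in_GL_fibre_def fibre_linear_def
    using eq vadd_fibre vsmul_fibre bij_betw_cong[of "fibre E p y" f f'] by (auto simp: Pi_iff)
qed

lemma in_SL_fibre_cong:
  assumes f: "in_SL_fibre TYPE('n::finite) E p vadd vsmul y f"
    and eq: "\<And>e. e \<in> fibre E p y \<Longrightarrow> f e = f' e"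
  shows "in_SL_fibre TYPE('n) E p vadd vsmul y f'"
proof -
  have "frame_matrix b b f' = frame_matrix b b f" if "fibre_frame TYPE('n) E p vadd vsmul y b" for b
    using eq fibre_frame_in_fibre[OF that] by (simp add: frame_matrix_def)
  then show ?thesis
    using f in_GL_fibre_cong[OF _ eq] by (simp add: in_SL_fibre_iff)
qed

end

lemma complex_vector_bundle_fibrewise_linear:
  assumes "complex_vector_bundle n X E p vadd vsmul"
  shows "fibrewise_linear_structure E p vadd vsmul"
  using assms unfolding complex_vector_bundle_def by unfold_locales (auto simp: fibre_def)

definition vec_cnj :: "complex^'n \<Rightarrow> complex^'n" where
  "vec_cnj v = (\<chi> i. cnj (v $ i))"

lemma vec_cnj_nth [simp]: "vec_cnj v $ i = cnj (v $ i)"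
  by (simp add: vec_cnj_def)

lemma vec_cnj_vec_cnj [simp]: "vec_cnj (vec_cnj v) = v"
  by (simp add: vec_cnj_def vec_eq_iff)

lemma vec_cnj_add: "vec_cnj (u + v) = vec_cnj u + vec_cnj v"
  by (simp add: vec_cnj_def vec_eq_iff)

lemma vec_cnj_scalar_mult: "vec_cnj (c *s v) = cnj c *s vec_cnj v"
  by (simp add: vec_cnj_def vec_eq_iff)

lemma vec_cnj_axis [simp]: "vec_cnj (axis j 1) = axis j 1"
  by (simp add: vec_cnj_def vec_eq_iff axis_def)

lemma det_cnj: "det (\<chi> i j. cnj (A $ i $ j)) = cnj (det (A :: complex^'n::finite^'n))"
  unfolding det_def by (simp add: cnj_sum cnj_prod)

locale real_structure =
  involutive_bundle X \<sigma> E p \<phi> + fibrewise_linear_structure E p vadd vsmul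
  for X :: "'a topology" and \<sigma> and E :: "'e topology" and p \<phi> vadd vsmul +
  assumes phi_vadd: "\<And>y e1 e2. e1 \<in> fibre E p y \<Longrightarrow> e2 \<in> fibre E p y \<Longrightarrow>
      \<phi> (vadd e1 e2) = vadd (\<phi> e1) (\<phi> e2)"
    and phi_vsmul: "\<And>c e. e \<in> topspace E \<Longrightarrow> \<phi> (vsmul c e) = vsmul (cnj c) (\<phi> e)"
begin

lemma in_GL_fibre_conj:
  assumes y: "y \<in> topspace X" and f: "in_GL_fibre E p vadd vsmul (\<sigma> y) f"
  shows "in_GL_fibre E p vadd vsmul y (\<lambda>e. \<phi> (f (\<phi> e)))"
proof -
  have fl: "fibre_linear E p vadd vsmul (\<sigma> y) f" and fb: "bij_betw f (fibre E p (\<sigma> y)) (fibre E p (\<sigma> y))"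
    using f unfolding in_GL_fibre_def by auto
  have \<phi>f\<phi>: "\<phi> (f (\<phi> e)) \<in> fibre E p y" if "e \<in> fibre E p y" for e
    using phi_fibre[OF fibre_linear_in_fibre[OF fl phi_fibre[OF that]]] sigma_sigma[OF y] by simp
  have "\<phi> (f (\<phi> (vadd e1 e2))) = vadd (\<phi> (f (\<phi> e1))) (\<phi> (f (\<phi> e2)))"
    if "e1 \<in> fibre E p y" "e2 \<in> fibre E p y" for e1 e2
    using that phi_fibre[of _ y] fibre_linear_in_fibre[OF fl] fl
    by (simp add: phi_vadd[of _ y] phi_vadd[of _ "\<sigma> y"] fibre_linear_def)
  moreover have "\<phi> (f (\<phi> (vsmul c e))) = vsmul c (\<phi> (f (\<phi> e)))" if "e \<in> fibre E p y" for c e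
    using that phi_fibre[of _ y] fibre_linear_in_fibre[OF fl] fl
    by (simp add: phi_vsmul fibre_def fibre_linear_def)
  moreover have "bij_betw (\<phi> \<circ> f \<circ> \<phi>) (fibre E p y) (fibre E p y)"
    using bij_betw_phi_fibre[OF y] bij_betw_phi_fibre[OF sigma_in_topspace[OF y]] fb sigma_sigma[OF y]
    by (auto intro: bij_betw_trans)
  ultimately show ?thesis
    unfolding in_GL_fibre_def fibre_linear_def by (auto simp: \<phi>f\<phi> o_def)
qed

lemma fibre_frame_conj:
  assumes y: "y \<in> topspace X" and b: "fibre_frame n E p vadd vsmul y b"
  shows "fibre_frame n E p vadd vsmul (\<sigma> y) (\<lambda>v. \<phi> (b (vec_cnj v)))"
proof -
  have "bij_betw vec_cnj (UNIV :: (complex^'n) set) UNIV"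
    by (rule bij_betw_byWitness[where f'=vec_cnj]) auto
  then have "bij_betw (\<phi> \<circ> b \<circ> vec_cnj) UNIV (fibre E p (\<sigma> y))"
    using b bij_betw_phi_fibre[OF y] unfolding fibre_frame_def by (blast intro: bij_betw_trans)
  then show ?thesis
    using b fibre_frame_in_fibre[OF b]
    unfolding fibre_frame_def
    by (auto simp: o_def vec_cnj_add vec_cnj_scalar_mult phi_vadd phi_vsmul fibre_def)
qed

lemma frame_matrix_conj:
  assumes y: "y \<in> topspace X" and b: "fibre_frame n E p vadd vsmul y b"
    and f: "fibre_linear E p vadd vsmul (\<sigma> y) f"
  defines "b' \<equiv> \<lambda>v. \<phi> (b (vec_cnj v))"
  shows "frame_matrix b b (\<lambda>e. \<phi> (f (\<phi> e))) = (\<chi> i j. cnj (frame_matrix b' b' f $ i $ j))"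
proof -
  have b': "fibre_frame n E p vadd vsmul (\<sigma> y) b'"
    unfolding b'_def by (rule fibre_frame_conj[OF y b])
  have "the_inv_into UNIV b (\<phi> (f (\<phi> (b v)))) = vec_cnj (the_inv_into UNIV b' (f (b' (vec_cnj v))))"
    for v
  proof -
    define w where "w = the_inv_into UNIV b' (f (b' (vec_cnj v)))"
    have "b' w = f (\<phi> (b v))"
      unfolding w_def
      using fibre_frame_inv_right[OF b' fibre_linear_in_fibre[OF f fibre_frame_in_fibre[OF b', of "vec_cnj v"]]]
      by (simp add: b'_def)
    then have "\<phi> (f (\<phi> (b v))) = \<phi> (\<phi> (b (vec_cnj w)))"
      by (simp add: b'_def)
    also have "\<dots> = b (vec_cnj w)"
      using fibre_frame_in_fibre[OF b] by (simp add: phi_phi fibre_def)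
    finally have "\<phi> (f (\<phi> (b v))) = b (vec_cnj w)" .
    then show ?thesis
      by (simp add: fibre_frame_inv_left[OF b] w_def)
  qed
  then show ?thesis
    by (simp add: frame_matrix_def matrix_def vec_eq_iff)
qed

lemma in_SL_fibre_conj:
  assumes y: "y \<in> topspace X" and f: "in_SL_fibre TYPE('n::finite) E p vadd vsmul (\<sigma> y) f"
  shows "in_SL_fibre TYPE('n) E p vadd vsmul y (\<lambda>e. \<phi> (f (\<phi> e)))"
proof -
  have gl: "in_GL_fibre E p vadd vsmul (\<sigma> y) f"
    using f by (simp add: in_SL_fibre_iff)
  have "det (frame_matrix b b (\<lambda>e. \<phi> (f (\<phi> e)))) = 1" if b: "fibre_frame TYPE('n) E p vadd vsmul y b" for b
    using gl f fibre_frame_conj[OF y b]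
    by (simp add: frame_matrix_conj[OF y b] det_cnj in_SL_fibre_iff in_GL_fibre_def)
  then show ?thesis
    using in_GL_fibre_conj[OF y gl] by (simp add: in_SL_fibre_iff)
qed

end

lemma real_bundle_pair_real_structure:
  assumes \<sigma>: "continuous_map X X \<sigma>" "\<And>y. y \<in> topspace X \<Longrightarrow> \<sigma> (\<sigma> y) = y"
    and rbp: "real_bundle_pair n X \<sigma> E p vadd vsmul \<phi>"
  shows "real_structure X \<sigma> E p \<phi> vadd vsmul"
proof -
  have cvb: "complex_vector_bundle n X E p vadd vsmul"
    and \<phi>: "continuous_map E E \<phi>" "\<And>e. e \<in> topspace E \<Longrightarrow> p (\<phi> e) = \<sigma> (p e)"
      "\<And>e. e \<in> topspace E \<Longrightarrow> \<phi> (\<phi> e) = e"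
      "\<And>e1 e2. e1 \<in> topspace E \<Longrightarrow> e2 \<in> topspace E \<Longrightarrow> p e1 = p e2 \<Longrightarrow>
        \<phi> (vadd e1 e2) = vadd (\<phi> e1) (\<phi> e2)"
      "\<And>c e. e \<in> topspace E \<Longrightarrow> \<phi> (vsmul c e) = vsmul (cnj c) (\<phi> e)"
    using rbp unfolding real_bundle_pair_def by auto
  have "continuous_map E X p"
    using cvb unfolding complex_vector_bundle_def by blast
  moreover have "involutive_bundle X \<sigma> E p \<phi>"
    by unfold_locales (use \<sigma> \<phi> calculation in auto)
  moreover have "real_structure_axioms E p \<phi> vadd vsmul"
    by unfold_locales (use \<phi> in \<open>auto simp: fibre_def\<close>)
  ultimately show ?thesis
    using complex_vector_bundle_fibrewise_linear[OF cvb] by (simp add: real_structure_def)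
qed

section \<open>Local trivialisations\<close>

definition chart_action ::
  "('e \<Rightarrow> 'a \<times> (complex^'n)) \<Rightarrow> ('a \<times> (complex^'n) \<Rightarrow> 'e) \<Rightarrow> complex^'n^'n \<Rightarrow> 'a \<Rightarrow> 'e \<Rightarrow> 'e" where
  "chart_action h g G y e = g (y, G *v snd (h e))"

locale linear_trivialisation = fibrewise_linear_structure E p vadd vsmul
  for E :: "'e topology" and p :: "'e \<Rightarrow> 'a" and vadd vsmul +
  fixes X :: "'a topology" and W :: "'a set"
    and h :: "'e \<Rightarrow> 'a \<times> (complex^'n::finite)" and g :: "'a \<times> (complex^'n) \<Rightarrow> 'e"
  assumes homeomorphic_maps_h_g: "homeomorphic_maps (subtopology E {e \<in> topspace E. p e \<in> W})
      (prod_topology (subtopology X W) euclidean) h g"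
    and W_subset: "W \<subseteq> topspace X"
    and fst_h: "\<And>e. e \<in> topspace E \<Longrightarrow> p e \<in> W \<Longrightarrow> fst (h e) = p e"
    and snd_h_vadd: "\<And>y e1 e2. y \<in> W \<Longrightarrow> e1 \<in> fibre E p y \<Longrightarrow> e2 \<in> fibre E p y \<Longrightarrow>
      snd (h (vadd e1 e2)) = snd (h e1) + snd (h e2)"
    and snd_h_vsmul: "\<And>y c e. y \<in> W \<Longrightarrow> e \<in> fibre E p y \<Longrightarrow> snd (h (vsmul c e)) = c *s snd (h e)"
begin

lemma h_g: "y \<in> W \<Longrightarrow> h (g (y, v)) = (y, v)"
  using homeomorphic_maps_h_g W_subset unfolding homeomorphic_maps_def by auto

lemma g_fibre: "y \<in> W \<Longrightarrow> g (y, v) \<in> fibre E p y"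
proof -
  assume y: "y \<in> W"
  have "continuous_map (prod_topology (subtopology X W) euclidean)
      (subtopology E {e \<in> topspace E. p e \<in> W}) g"
    using homeomorphic_maps_h_g unfolding homeomorphic_maps_def by auto
  then have "g (y, v) \<in> topspace E" "p (g (y, v)) \<in> W"
    using y W_subset continuous_map_image_subset_topspace by fastforce+
  then show ?thesis
    using fst_h h_g[OF y] by (force simp: fibre_def)
qed

lemma g_h: "y \<in> W \<Longrightarrow> e \<in> fibre E p y \<Longrightarrow> g (y, snd (h e)) = e"
  using homeomorphic_maps_h_g fst_h unfolding homeomorphic_maps_def fibre_def
  by (metis (mono_tags, lifting) mem_Collect_eq prod.collapse topspace_subtopology_subset Int_iff
      topspace_subtopology)

lemma fibre_frame_chart: "y \<in> W \<Longrightarrow> fibre_frame TYPE('n) E p vadd vsmul y (curry g y)"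
proof -
  assume y: "y \<in> W"
  have "inj (curry g y)"
    by (rule injI) (metis curry_conv h_g[OF y] snd_conv)
  moreover have "range (curry g y) = fibre E p y"
    using g_fibre[OF y] g_h[OF y] by (auto simp: image_iff) (metis curry_conv)
  moreover have "g (y, u + v) = vadd (g (y, u)) (g (y, v))" for u v
    using g_h[OF y vadd_fibre[OF g_fibre[OF y] g_fibre[OF y]]]
    by (simp add: snd_h_vadd[OF y g_fibre[OF y] g_fibre[OF y]] h_g[OF y])
  moreover have "g (y, c *s v) = vsmul c (g (y, v))" for c v
    using g_h[OF y vsmul_fibre[OF g_fibre[OF y]]]
    by (simp add: snd_h_vsmul[OF y g_fibre[OF y]] h_g[OF y])
  ultimately show ?thesis
    unfolding fibre_frame_def bij_betw_def by simp
qed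

lemma the_inv_chart: "y \<in> W \<Longrightarrow> e \<in> fibre E p y \<Longrightarrow> the_inv_into UNIV (curry g y) e = snd (h e)"
  by (metis curry_conv fibre_frame_chart fibre_frame_inv_left g_h)

lemma chart_action_mult:
  "y \<in> W \<Longrightarrow> chart_action h g A y (chart_action h g B y e) = chart_action h g (A ** B) y e"
  by (simp add: chart_action_def h_g matrix_vector_mul_assoc)

lemma chart_action_mat_1: "y \<in> W \<Longrightarrow> e \<in> fibre E p y \<Longrightarrow> chart_action h g (mat 1) y e = e"
  by (simp add: chart_action_def g_h)

lemma chart_action_fibre: "y \<in> W \<Longrightarrow> chart_action h g G y e \<in> fibre E p y"
  by (simp add: chart_action_def g_fibre)

lemma fibre_linear_chart_action:
  assumes y: "y \<in> W"
  shows "fibre_linear E p vadd vsmul y (chart_action h g G y)"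
proof -
  have frame: "fibre_frame TYPE('n) E p vadd vsmul y (curry g y)"
    by (rule fibre_frame_chart[OF y])
  show ?thesis
    unfolding fibre_linear_def chart_action_def
    using g_fibre[OF y] frame unfolding fibre_frame_def
    by (auto simp: snd_h_vadd[OF y] snd_h_vsmul[OF y] matrix_vector_right_distrib
        vector_scalar_commute)
qed

lemma in_GL_fibre_chart_action:
  assumes y: "y \<in> W" and G: "invertible G"
  shows "in_GL_fibre E p vadd vsmul y (chart_action h g G y)"
proof -
  obtain G' where G': "G ** G' = mat 1" "G' ** G = mat 1"
    using G unfolding invertible_def by blast
  have "bij_betw (chart_action h g G y) (fibre E p y) (fibre E p y)"
    by (rule bij_betw_byWitness[where f'="chart_action h g G' y"])
      (auto simp: chart_action_mult[OF y] G' chart_action_mat_1[OF y] chart_action_fibre[OF y])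
  then show ?thesis
    unfolding in_GL_fibre_def using fibre_linear_chart_action[OF y] by blast
qed

lemma frame_matrix_chart_action:
  "y \<in> W \<Longrightarrow> frame_matrix (curry g y) (curry g y) (chart_action h g G y) = G"
  by (simp add: frame_matrix_def chart_action_def h_g the_inv_chart g_fibre)

lemma in_SL_fibre_chart_action:
  assumes y: "y \<in> W" and G: "det G = 1"
  shows "in_SL_fibre TYPE('n) E p vadd vsmul y (chart_action h g G y)"
  using in_GL_fibre_chart_action[OF y] G det_frame_matrix_change_frame[OF _ fibre_frame_chart[OF y]
      fibre_linear_chart_action[OF y]]
  by (simp add: in_SL_fibre_iff invertible_det_nz frame_matrix_chart_action[OF y])

lemma chart_action_frame_matrix:
  assumes y: "y \<in> W" and f: "fibre_linear E p vadd vsmul y f" and e: "e \<in> fibre E p y"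
  shows "chart_action h g (frame_matrix (curry g y) (curry g y) f) y e = f e"
proof -
  have frame: "fibre_frame TYPE('n) E p vadd vsmul y (curry g y)"
    by (rule fibre_frame_chart[OF y])
  show ?thesis
    using frame_matrix_apply[OF frame frame f] fibre_frame_inv_right[OF frame fibre_linear_in_fibre[OF f e]]
    by (simp add: chart_action_def g_h[OF y e])
qed

lemma continuous_map_chart_action:
  assumes e: "continuous_map Z E e" and eW: "\<And>z. z \<in> topspace Z \<Longrightarrow> p (e z) \<in> W"
    and A: "continuous_map Z euclidean A"
  shows "continuous_map Z E (\<lambda>z. chart_action h g (A z) (p (e z)) (e z))"
proof -
  let ?EW = "subtopology E {e \<in> topspace E. p e \<in> W}"
  have h: "continuous_map ?EW (prod_topology (subtopology X W) euclidean) h"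
    and g: "continuous_map (prod_topology (subtopology X W) euclidean) ?EW g"
    using homeomorphic_maps_h_g unfolding homeomorphic_maps_def by auto
  have "continuous_map Z ?EW e"
    using e eW continuous_map_image_subset_topspace[OF e]
    by (intro continuous_map_into_subtopology) auto
  then have he: "continuous_map Z (prod_topology (subtopology X W) euclidean) (\<lambda>z. h (e z))"
    using continuous_map_compose[OF _ h] by (simp add: o_def)
  have "continuous_map Z (prod_topology (subtopology X W) euclidean)
      (\<lambda>z. (fst (h (e z)), A z *v snd (h (e z))))"
    using continuous_map_compose[OF he continuous_map_fst] continuous_map_compose[OF he continuous_map_snd]
    by (intro continuous_map_pairedI continuous_map_matrix_vector_mult A) (simp_all add: o_def)
  from continuous_map_compose[OF this g]
  have "continuous_map Z E (\<lambda>z. g (fst (h (e z)), A z *v snd (h (e z))))"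
    by (simp add: o_def continuous_map_in_subtopology)
  then show ?thesis
    by (rule continuous_map_eq)
      (use eW fst_h continuous_map_image_subset_topspace[OF e] in \<open>auto simp: chart_action_def\<close>)
qed

lemma continuous_map_chart_homotopy:
  fixes H :: "real \<Rightarrow> real \<Rightarrow> complex^'n^'n"
  assumes H: "continuous_on ({0..1} \<times> {0..1}) (\<lambda>(s, t). H s t)"
    and \<rho>: "continuous_map X (top_of_set {0..1}) \<rho>" and p: "continuous_map E X p" and S: "S \<subseteq> W"
  shows "continuous_map (subtopology (prod_topology (top_of_set {0..1}) E)
      (topspace (top_of_set {0..1}) \<times> {e \<in> topspace E. p e \<in> S})) E
      (\<lambda>(t, e). chart_action h g (H (\<rho> (p e)) t) (p e) e)"
proof -
  let ?Z = "subtopology (prod_topology (top_of_set {0..1::real}) E) ({0..1} \<times> {e \<in> topspace E. p e \<in> S})"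
  have "continuous_map ?Z (top_of_set {0..1}) (\<lambda>z. \<rho> (p (snd z)))"
    using continuous_map_compose[OF continuous_map_compose[OF continuous_map_snd p] \<rho>]
    by (intro continuous_map_from_subtopology) (simp add: o_def)
  then have A: "continuous_map ?Z euclidean (\<lambda>z. H (\<rho> (p (snd z))) (fst z))"
    by (intro continuous_map_on_unit_square[OF H])
      (simp_all add: continuous_map_from_subtopology continuous_map_fst)
  have "continuous_map ?Z E (\<lambda>z. chart_action h g (H (\<rho> (p (snd z))) (fst z)) (p (snd z)) (snd z))"
    using S by (intro continuous_map_chart_action[OF continuous_map_from_subtopology[OF continuous_map_snd] _ A])
      auto
  then show ?thesis
    by (simp add: case_prod_beta')
qed

lemma frame_matrix_chart_nth:
  assumes "y \<in> W" "fibre_linear E p vadd vsmul y f"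
  shows "frame_matrix (curry g y) (curry g y) f $ i $ j = snd (h (f (g (y, axis j 1)))) $ i"
  using assms by (simp add: frame_matrix_def matrix_def the_inv_chart fibre_linear_in_fibre g_fibre)

lemma continuous_on_frame_matrix_path:
  assumes y: "y \<in> W" and \<psi>: "fibre_path_cont E p y \<psi>"
    and lin: "\<And>t. t \<in> {0..1} \<Longrightarrow> fibre_linear E p vadd vsmul y (\<psi> t)"
  shows "continuous_on {0..1} (\<lambda>t. frame_matrix (curry g y) (curry g y) (\<psi> t))"
proof (rule continuous_on_eq)
  show "continuous_on {0..1} (\<lambda>t. \<chi> i j. snd (h (\<psi> t (g (y, axis j 1)))) $ i)"
  proof (intro continuous_on_vec_lambda)
    fix i j
    let ?e = "g (y, axis j 1)"
    have "continuous_map (top_of_set {0..1}) (prod_topology (top_of_set {0..1}) (subtopology E (fibre E p y)))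
        (\<lambda>t. (t, ?e))"
      using g_fibre[OF y] by (intro continuous_map_pairedI) (auto simp: fibre_def)
    from continuous_map_compose[OF this \<psi>[unfolded fibre_path_cont_def]]
    have "continuous_map (top_of_set {0..1}) E (\<lambda>t. \<psi> t ?e)"
      by (simp add: o_def)
    then have c: "continuous_map (top_of_set {0..1}) (subtopology E {e \<in> topspace E. p e \<in> W})
        (\<lambda>t. \<psi> t ?e)"
      using y fibre_linear_in_fibre[OF lin g_fibre[OF y]]
      by (intro continuous_map_into_subtopology) (auto simp: fibre_def)
    have "continuous_map (subtopology E {e \<in> topspace E. p e \<in> W})
        (prod_topology (subtopology X W) euclidean) h"
      using homeomorphic_maps_h_g unfolding homeomorphic_maps_def by auto
    from continuous_map_compose[OF continuous_map_compose[OF c this] continuous_map_snd]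
    have "continuous_on {0..1} (\<lambda>t. snd (h (\<psi> t ?e)))"
      by (simp add: o_def)
    then show "continuous_on {0..1} (\<lambda>t. snd (h (\<psi> t ?e)) $ i)"
      by (intro continuous_intros)
  qed
  show "(\<chi> i j. snd (h (\<psi> t (g (y, axis j 1)))) $ i) = frame_matrix (curry g y) (curry g y) (\<psi> t)"
    if "t \<in> {0..1}" for t
    using frame_matrix_chart_nth[OF y lin[OF that]] by (simp add: vec_eq_iff)
qed

end

lemma linear_trivialisation_at:
  assumes cvb: "complex_vector_bundle TYPE('n::finite) X E p vadd vsmul" and x: "x \<in> topspace X"
  obtains W h g where "openin X W" "x \<in> W"
    "linear_trivialisation E p vadd vsmul X W (h :: 'e \<Rightarrow> 'a \<times> (complex^'n)) g"
proof -
  obtain W and h :: "'e \<Rightarrow> 'a \<times> (complex^'n)" where W: "openin X W" "x \<in> W"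
    and h: "homeomorphic_map (subtopology E {e \<in> topspace E. p e \<in> W})
      (prod_topology (subtopology X W) euclidean) h"
    and h_fst: "\<forall>e\<in>topspace E. p e \<in> W \<longrightarrow> fst (h e) = p e"
    and h_vadd: "\<forall>e1\<in>topspace E. \<forall>e2\<in>topspace E. p e1 \<in> W \<and> p e1 = p e2 \<longrightarrow>
      h (vadd e1 e2) = (p e1, snd (h e1) + snd (h e2))"
    and h_vsmul: "\<forall>c. \<forall>e\<in>topspace E. p e \<in> W \<longrightarrow> h (vsmul c e) = (p e, c *s snd (h e))"
    using cvb[unfolded complex_vector_bundle_def, THEN conjunct2, THEN conjunct2, THEN conjunct2,
      rule_format, OF x]
    by (elim exE conjE) blast
  obtain g where hg: "homeomorphic_maps (subtopology E {e \<in> topspace E. p e \<in> W})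
      (prod_topology (subtopology X W) euclidean) h g"
    using h homeomorphic_map_maps by blast
  interpret fibrewise_linear_structure E p vadd vsmul
    by (rule complex_vector_bundle_fibrewise_linear[OF cvb])
  have "linear_trivialisation E p vadd vsmul X W h g"
    using hg openin_subset[OF W(1)] h_fst h_vadd h_vsmul by unfold_locales (auto simp: fibre_def)
  then show ?thesis
    by (rule that[OF W])
qed

section \<open>Extension of fibre paths\<close>

context real_structure
begin

text \<open>Symmetrization needs \<open>W\<close> disjoint from \<open>\<sigma>(W)\<close>; this is where \<open>\<sigma> x \<noteq> x\<close> enters.\<close>
lemma symmetric_extension:
  fixes H :: "real \<Rightarrow> real \<Rightarrow> complex^'n::finite^'n" and P :: "'a \<Rightarrow> ('e \<Rightarrow> 'e) \<Rightarrow> bool"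
  assumes X: "compact_space X" "Hausdorff_space X"
    and triv: "linear_trivialisation E p vadd vsmul X W0 h g" "openin X W0"
    and x: "x \<in> W0" "\<sigma> x \<noteq> x" and U: "openin X U" "x \<in> U"
    and H: "continuous_on ({0..1} \<times> {0..1}) (\<lambda>(s, t). H s t)" "\<And>t. t \<in> {0..1} \<Longrightarrow> H 0 t = mat 1"
    and P_H: "\<And>y s t. y \<in> W0 \<Longrightarrow> s \<in> {0..1} \<Longrightarrow> t \<in> {0..1} \<Longrightarrow> P y (chart_action h g (H s t) y)"
    and P_conj: "\<And>y f. y \<in> topspace X \<Longrightarrow> P (\<sigma> y) f \<Longrightarrow> P y (\<lambda>e. \<phi> (f (\<phi> e)))"
    and P_id: "\<And>y. P y (\<lambda>e. e)"
    and P_cong: "\<And>y f f'. P y f \<Longrightarrow> (\<And>e. e \<in> fibre E p y \<Longrightarrow> f e = f' e) \<Longrightarrow> P y f'"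
  obtains \<Psi> where "bundle_path_cont E \<Psi>"
    "\<And>t. t \<in> {0..1} \<Longrightarrow> continuous_map E E (\<Psi> t)"
    "\<And>t e. t \<in> {0..1} \<Longrightarrow> e \<in> topspace E \<Longrightarrow> \<Psi> t (\<phi> e) = \<phi> (\<Psi> t e)"
    "\<And>t y. t \<in> {0..1} \<Longrightarrow> y \<in> topspace X \<Longrightarrow> P y (\<Psi> t)"
    "\<And>t e. t \<in> {0..1} \<Longrightarrow> e \<in> fibre E p x \<Longrightarrow> \<Psi> t e = chart_action h g (H 1 t) x e"
    "\<And>t e. t \<in> {0..1} \<Longrightarrow> e \<in> topspace E \<Longrightarrow> p e \<notin> U \<union> \<sigma> ` U \<Longrightarrow> \<Psi> t e = e"
proof -
  interpret T: linear_trivialisation E p vadd vsmul X W0 h g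
    by (rule triv(1))
  have "x \<in> W0 \<inter> U"
    using x U by blast
  then obtain W where W: "openin X W" "x \<in> W" "W \<subseteq> W0 \<inter> U" "\<And>y. y \<in> W \<Longrightarrow> \<sigma> y \<notin> W"
    using involution_free_neighbourhood[OF X(2) continuous_sigma openin_Int[OF triv(2) U(1)] _ x(2)]
    by metis
  obtain V and \<rho> :: "'a \<Rightarrow> real" where V: "openin X V" "x \<in> V" "X closure_of V \<subseteq> W"
    and \<rho>: "continuous_map X (top_of_set {0..1}) \<rho>" "\<rho> x = 1" "\<And>y. y \<in> topspace X - V \<Longrightarrow> \<rho> y = 0"
    using bump_function[OF X W(1,2)] by metis
  define F where "F t e = chart_action h g (H (\<rho> (p e)) t) (p e) e" for t e
  define \<Psi> where "\<Psi> t = symmetrize p \<sigma> \<phi> W (F t)" for t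
  have F_fibre: "F t e \<in> fibre E p y" if "e \<in> fibre E p y" "y \<in> W" for t e y
    using that W(3) T.chart_action_fibre by (auto simp: F_def fibre_def)
  have F_cont: "continuous_map (subtopology (prod_topology (top_of_set {0..1}) E)
      (topspace (top_of_set {0..1}) \<times> {e \<in> topspace E. p e \<in> W})) E (\<lambda>(t, e). F t e)"
    unfolding F_def using W(3) by (intro T.continuous_map_chart_homotopy[OF H(1) \<rho>(1) continuous_p]) auto
  have F_id: "F t e = e"
    if "t \<in> topspace (top_of_set {0..1})" "e \<in> topspace E" "p e \<in> W - X closure_of V" for t e
  proof -
    have "\<rho> (p e) = 0"
      using that \<rho>(3) closure_of_subset[OF openin_subset[OF V(1)]] p_in_topspace by auto
    moreover have "e \<in> fibre E p (p e)" "p e \<in> W0"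
      using that W(3) by (auto simp: fibre_def)
    ultimately show ?thesis
      using that H(2) T.chart_action_mat_1 by (simp add: F_def)
  qed
  have path: "bundle_path_cont E \<Psi>"
    unfolding bundle_path_cont_def \<Psi>_def
    using continuous_map_symmetrize[OF W(1,4) closedin_closure_of V(3) F_cont F_id] by simp
  have "continuous_map E E (\<Psi> t)" if "t \<in> {0..1}" for t
    using continuous_map_compose[OF _ path[unfolded bundle_path_cont_def], of E "\<lambda>e. (t, e)"] that
    by (simp add: o_def continuous_map_pairedI)
  moreover have "\<Psi> t (\<phi> e) = \<phi> (\<Psi> t e)" if "e \<in> topspace E" for t e
    unfolding \<Psi>_def using W(4) F_fibre that by (intro symmetrize_phi) (auto simp: fibre_def)
  moreover have "P y (\<Psi> t)" if "t \<in> {0..1}" "y \<in> topspace X" for t y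
    unfolding \<Psi>_def
  proof (rule symmetrize_fibrewise[where P=P, OF that(2) _ P_conj P_id P_cong])
    show "P y (F t)" if "y \<in> W" for y
    proof (rule P_cong)
      have "\<rho> y \<in> {0..1}"
        using continuous_map_image_subset_topspace[OF \<rho>(1)] that openin_subset[OF W(1)]
        by (force simp: image_subset_iff)
      then show "P y (chart_action h g (H (\<rho> y) t) y)"
        using P_H \<open>t \<in> {0..1}\<close> that W(3) by blast
    qed (simp add: F_def fibre_def)
  qed
  moreover have "\<Psi> t e = chart_action h g (H 1 t) x e" if "e \<in> fibre E p x" for t e
    using that W(2) \<rho>(2) by (simp add: \<Psi>_def symmetrize_def F_def fibre_def)
  moreover have "\<Psi> t e = e" if "e \<in> topspace E" "p e \<notin> U \<union> \<sigma> ` U" for t e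
    unfolding \<Psi>_def using symmetrize_outside W(3) that by blast
  ultimately show ?thesis
    using that[OF path] by blast
qed

lemma GL_fibre_path_extension:
  assumes X: "compact_space X" "Hausdorff_space X"
    and cvb: "complex_vector_bundle TYPE('n::finite) X E p vadd vsmul"
    and x: "x \<in> topspace X" "\<sigma> x \<noteq> x" and U: "openin X U" "x \<in> U"
    and \<psi>: "GL_fibre_path E p vadd vsmul x \<psi>"
  shows "\<exists>\<Psi>. GL_bundle_path X E p vadd vsmul \<phi> \<Psi> \<and>
    (\<forall>t\<in>{0..1}. \<forall>e\<in>fibre E p x. \<Psi> t e = \<psi> t e) \<and>
    (\<forall>t\<in>{0..1}. \<forall>e\<in>topspace E. p e \<notin> U \<union> \<sigma> ` U \<longrightarrow> \<Psi> t e = e)"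
proof -
  obtain W0 h g where W0: "openin X W0" "x \<in> W0"
    and triv: "linear_trivialisation E p vadd vsmul X W0 (h :: 'e \<Rightarrow> 'a \<times> (complex^'n)) g"
    using linear_trivialisation_at[OF cvb x(1)] by metis
  interpret T: linear_trivialisation E p vadd vsmul X W0 h g
    by (rule triv)
  have frame: "fibre_frame TYPE('n) E p vadd vsmul x (curry g x)"
    by (rule T.fibre_frame_chart[OF W0(2)])
  have GL: "\<And>t. t \<in> {0..1} \<Longrightarrow> in_GL_fibre E p vadd vsmul x (\<psi> t)"
    and lin: "\<And>t. t \<in> {0..1} \<Longrightarrow> fibre_linear E p vadd vsmul x (\<psi> t)"
    and cont: "fibre_path_cont E p x \<psi>"
    using \<psi> unfolding GL_fibre_path_def in_GL_fibre_def by auto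
  define M where "M t = frame_matrix (curry g x) (curry g x) (\<psi> t)" for t
  have M: "continuous_on {0..1} M" "\<And>t. t \<in> {0..1} \<Longrightarrow> invertible (M t)"
    unfolding M_def using T.continuous_on_frame_matrix_path[OF W0(2) cont lin]
      invertible_frame_matrix[OF frame frame GL] by auto
  obtain H :: "real \<Rightarrow> real \<Rightarrow> complex^'n^'n" where H: "continuous_on ({0..1} \<times> {0..1}) (\<lambda>(s, t). H s t)"
    "\<And>t. t \<in> {0..1} \<Longrightarrow> H 0 t = mat 1" "\<And>t. t \<in> {0..1} \<Longrightarrow> H 1 t = M t"
    "\<And>s t. s \<in> {0..1} \<Longrightarrow> t \<in> {0..1} \<Longrightarrow> invertible (H s t)"
    using invertible_path_homotopy_from_id[OF M] by metis
  obtain \<Psi> where \<Psi>: "bundle_path_cont E \<Psi>"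
    "\<And>t. t \<in> {0..1} \<Longrightarrow> continuous_map E E (\<Psi> t)"
    "\<And>t e. t \<in> {0..1} \<Longrightarrow> e \<in> topspace E \<Longrightarrow> \<Psi> t (\<phi> e) = \<phi> (\<Psi> t e)"
    "\<And>t y. t \<in> {0..1} \<Longrightarrow> y \<in> topspace X \<Longrightarrow> in_GL_fibre E p vadd vsmul y (\<Psi> t)"
    "\<And>t e. t \<in> {0..1} \<Longrightarrow> e \<in> fibre E p x \<Longrightarrow> \<Psi> t e = chart_action h g (H 1 t) x e"
    "\<And>t e. t \<in> {0..1} \<Longrightarrow> e \<in> topspace E \<Longrightarrow> p e \<notin> U \<union> \<sigma> ` U \<Longrightarrow> \<Psi> t e = e"
  proof (rule symmetric_extension[where P="in_GL_fibre E p vadd vsmul", OF X triv W0(1,2) x(2) U H(1,2) _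
        in_GL_fibre_conj in_GL_fibre_id in_GL_fibre_cong])
    show "in_GL_fibre E p vadd vsmul y (chart_action h g (H s t) y)"
      if "y \<in> W0" "s \<in> {0..1}" "t \<in> {0..1}" for y s t
      using T.in_GL_fibre_chart_action H(4) that by blast
  qed (assumption | rule that)+
  have "GL_bundle_path X E p vadd vsmul \<phi> \<Psi>"
    using \<Psi>(1-4) unfolding GL_bundle_path_def in_GL_bundle_def by blast
  moreover have "\<Psi> t e = \<psi> t e" if "t \<in> {0..1}" "e \<in> fibre E p x" for t e
    using that \<Psi>(5) H(3) T.chart_action_frame_matrix[OF W0(2) lin] by (simp add: M_def)
  ultimately show ?thesis
    using \<Psi>(6) by blast
qed

lemma SL_fibre_path_extension:
  assumes X: "compact_space X" "Hausdorff_space X"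
    and cvb: "complex_vector_bundle TYPE('n::finite) X E p vadd vsmul"
    and x: "x \<in> topspace X" "\<sigma> x \<noteq> x" and U: "openin X U" "x \<in> U"
    and \<psi>: "SL_fibre_path TYPE('n) E p vadd vsmul x \<psi>"
  shows "\<exists>\<Psi>. SL_bundle_path TYPE('n) X E p vadd vsmul \<phi> \<Psi> \<and>
    (\<forall>t\<in>{0..1}. \<forall>e\<in>fibre E p x. \<Psi> t e = \<psi> t e) \<and>
    (\<forall>t\<in>{0..1}. \<forall>e\<in>topspace E. p e \<notin> U \<union> \<sigma> ` U \<longrightarrow> \<Psi> t e = e)"
proof -
  obtain W0 h g where W0: "openin X W0" "x \<in> W0"
    and triv: "linear_trivialisation E p vadd vsmul X W0 (h :: 'e \<Rightarrow> 'a \<times> (complex^'n)) g"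
    using linear_trivialisation_at[OF cvb x(1)] by metis
  interpret T: linear_trivialisation E p vadd vsmul X W0 h g
    by (rule triv)
  have frame: "fibre_frame TYPE('n) E p vadd vsmul x (curry g x)"
    by (rule T.fibre_frame_chart[OF W0(2)])
  have SL: "\<And>t. t \<in> {0..1} \<Longrightarrow> in_SL_fibre TYPE('n) E p vadd vsmul x (\<psi> t)"
    and lin: "\<And>t. t \<in> {0..1} \<Longrightarrow> fibre_linear E p vadd vsmul x (\<psi> t)"
    and cont: "fibre_path_cont E p x \<psi>"
    using \<psi> unfolding SL_fibre_path_def in_SL_fibre_iff in_GL_fibre_def by auto
  define M where "M t = frame_matrix (curry g x) (curry g x) (\<psi> t)" for t
  have M: "continuous_on {0..1} M" "\<And>t. t \<in> {0..1} \<Longrightarrow> det (M t) = 1"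
    unfolding M_def using T.continuous_on_frame_matrix_path[OF W0(2) cont lin] SL frame
    by (auto simp: in_SL_fibre_iff)
  obtain H :: "real \<Rightarrow> real \<Rightarrow> complex^'n^'n" where H: "continuous_on ({0..1} \<times> {0..1}) (\<lambda>(s, t). H s t)"
    "\<And>t. t \<in> {0..1} \<Longrightarrow> H 0 t = mat 1" "\<And>t. t \<in> {0..1} \<Longrightarrow> H 1 t = M t"
    "\<And>s t. s \<in> {0..1} \<Longrightarrow> t \<in> {0..1} \<Longrightarrow> det (H s t) = 1"
    using det_one_path_homotopy_from_id[OF M] by metis
  obtain \<Psi> where \<Psi>: "bundle_path_cont E \<Psi>"
    "\<And>t. t \<in> {0..1} \<Longrightarrow> continuous_map E E (\<Psi> t)"
    "\<And>t e. t \<in> {0..1} \<Longrightarrow> e \<in> topspace E \<Longrightarrow> \<Psi> t (\<phi> e) = \<phi> (\<Psi> t e)"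
    "\<And>t y. t \<in> {0..1} \<Longrightarrow> y \<in> topspace X \<Longrightarrow> in_SL_fibre TYPE('n) E p vadd vsmul y (\<Psi> t)"
    "\<And>t e. t \<in> {0..1} \<Longrightarrow> e \<in> fibre E p x \<Longrightarrow> \<Psi> t e = chart_action h g (H 1 t) x e"
    "\<And>t e. t \<in> {0..1} \<Longrightarrow> e \<in> topspace E \<Longrightarrow> p e \<notin> U \<union> \<sigma> ` U \<Longrightarrow> \<Psi> t e = e"
  proof (rule symmetric_extension[where P="in_SL_fibre TYPE('n) E p vadd vsmul", OF X triv W0(1,2) x(2) U H(1,2) _
        in_SL_fibre_conj in_SL_fibre_id in_SL_fibre_cong])
    show "in_SL_fibre TYPE('n) E p vadd vsmul y (chart_action h g (H s t) y)"
      if "y \<in> W0" "s \<in> {0..1}" "t \<in> {0..1}" for y s t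
      using T.in_SL_fibre_chart_action H(4) that by blast
  qed (assumption | rule that)+
  have "SL_bundle_path TYPE('n) X E p vadd vsmul \<phi> \<Psi>"
    using \<Psi>(1-4) unfolding SL_bundle_path_def in_SL_bundle_def in_GL_bundle_def in_SL_fibre_iff by blast
  moreover have "\<Psi> t e = \<psi> t e" if "t \<in> {0..1}" "e \<in> fibre E p x" for t e
    using that \<Psi>(5) H(3) T.chart_action_frame_matrix[OF W0(2) lin] by (simp add: M_def)
  ultimately show ?thesis
    using \<Psi>(6) by blast
qed

end

theorem lemma3p4:
  fixes X :: "'a topology" and \<sigma> :: "'a \<Rightarrow> 'a"
    and E :: "'e topology" and p :: "'e \<Rightarrow> 'a"
    and vadd :: "'e \<Rightarrow> 'e \<Rightarrow> 'e" and vsmul :: "complex \<Rightarrow> 'e \<Rightarrow> 'e" and \<phi> :: "'e \<Rightarrow> 'e"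
  assumes "symmetric_surface X \<sigma>"
    and "real_bundle_pair TYPE('n::finite) X \<sigma> E p vadd vsmul \<phi>"
  shows "(\<forall>x U \<psi>. x \<in> topspace X - fixed_locus X \<sigma> \<and> openin X U \<and> x \<in> U \<and>
             SL_fibre_path TYPE('n) E p vadd vsmul x \<psi> \<longrightarrow>
           (\<exists>\<Psi>. SL_bundle_path TYPE('n) X E p vadd vsmul \<phi> \<Psi> \<and>
                 (\<forall>t\<in>{0..1}. \<forall>e\<in>fibre E p x. \<Psi> t e = \<psi> t e) \<and>
                 (\<forall>t\<in>{0..1}. \<forall>e\<in>topspace E. p e \<notin> U \<union> \<sigma> ` U \<longrightarrow> \<Psi> t e = e)))
       \<and> (\<forall>x U \<psi>. x \<in> topspace X - fixed_locus X \<sigma> \<and> openin X U \<and> x \<in> U \<and>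
             GL_fibre_path E p vadd vsmul x \<psi> \<longrightarrow>
           (\<exists>\<Psi>. GL_bundle_path X E p vadd vsmul \<phi> \<Psi> \<and>
                 (\<forall>t\<in>{0..1}. \<forall>e\<in>fibre E p x. \<Psi> t e = \<psi> t e) \<and>
                 (\<forall>t\<in>{0..1}. \<forall>e\<in>topspace E. p e \<notin> U \<union> \<sigma> ` U \<longrightarrow> \<Psi> t e = e)))"
proof -
  have X: "compact_space X" "Hausdorff_space X"
    and \<sigma>: "continuous_map X X \<sigma>" "\<And>y. y \<in> topspace X \<Longrightarrow> \<sigma> (\<sigma> y) = y"
    using assms(1) unfolding symmetric_surface_def nodal_surface_def by auto
  interpret real_structure X \<sigma> E p \<phi> vadd vsmul
    by (rule real_bundle_pair_real_structure[OF \<sigma> assms(2)])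
  have cvb: "complex_vector_bundle TYPE('n) X E p vadd vsmul"
    using assms(2) unfolding real_bundle_pair_def by blast
  show ?thesis
    using SL_fibre_path_extension[OF X cvb] GL_fibre_path_extension[OF X cvb]
    by (simp add: fixed_locus_def)
qed

end
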